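(* For any atomic proposition $p$, the rules $\mathsf{acl}_p$: from $\Gamma,p,p\Rightarrow\Delta$ infer $\Gamma,p\Rightarrow\Delta$, and $\mathsf{acr}_p$: from $\Gamma\Rightarrow p,p,\Delta$ infer $\Gamma\Rightarrow p,\Delta$ (with $\Gamma,\Delta$ arbitrary finite multisets of formulas) are strongly admissible in $\mathsf{Grz}_\infty+\mathsf{cut}$.
   Context: Formulas are built from $\bot$ and atoms by $\to$ and $\Box$; sequents $\Gamma\Rightarrow\Delta$ have finite multisets of formulas on each side; $\Box\Pi$ denotes $\{\Box B:B\in\Pi\}$. The calculus $\mathsf{Grz}_\infty+\mathsf{cut}$ has initial sequents $\Gamma,p\Rightarrow p,\Delta$ ($p$ atomic), $\Gamma,\bot\Rightarrow\Delta$, and rules $(\to_L)$ from $\Gamma,B\Rightarrow\Delta$ and $\Gamma\Rightarrow A,\Delta$ infer $\Gamma,A\to B\Rightarrow\Delta$; $(\to_R)$ from $\Gamma,A\Rightarrow B,\Delta$ infer $\Gamma\Rightarrow A\to B,\Delta$; $(\mathsf{refl})$ from $\Gamma,B,\Box B\Rightarrow\Delta$ infer $\Gamma,\Box B\Rightarrow\Delta$; $(\Box)$ from left premise $\Gamma,\Box\Pi\Rightarrow A,\Delta$ and right premise $\Box\Pi\Rightarrow A$ infer $\Gamma,\Box\Pi\Rightarrow\Box A,\Delta$; $(\mathsf{cut})$ from $\Gamma\Rightarrow A,\Delta$ and $\Gamma,A\Rightarrow\Delta$ infer $\Gamma\Rightarrow\Delta$. An $\infty$-proof is a possibly infinite tree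 of sequents built by these rules with leaves labelled by initial sequents, in which every infinite branch passes through a right premise of $(\Box)$ infinitely often; $\mathcal P$ is the set of all $\infty$-proofs. The $n$-fragment of an $\infty$-proof is the finite tree obtained by cutting every branch at the $n$-th (from the root) right premise of $(\Box)$; the main fragment is the $1$-fragment; the local height $|\pi|$ is the length of the longest branch of the main fragment (an $\infty$-proof consisting only of an initial sequent has height $0$). Write $\pi\sim_n\tau$ if the $n$-fragments of $\pi,\tau$ coincide, and $\pi\sim_0\tau$ always. $\mathcal P_n$ is the set of $\infty$-proofs with no application of $(\mathsf{cut})$ in their $n$-fragment, and $\mathcal P_0=\mathcal P$. A single-premise rule is strongly admissible in $\mathsf{Grz}_\infty+\mathsf{cut}$ if there is a mapping $\mathsf u:\mathcal P\to\mathcal P$ such that: (i) $\mathsf u$ is non-expansive: $\pi\sim_n\pi'$ implies $\mathsf u(\pi)\sim_n\mathsf u(\pi')$ for all $n$; (ii) $\mathsf u$ is adequate: $\pi\in\mathcal P_n$ implies $\mathsf u(\pi)\in\mathcal P_n$ for all $n$; (iii) $|\mathsf u(\pi)|\le|\pi|$ for all $\pi\in\mathcal P$; (iv) for every instance of the rule, $\mathsf u$ maps every $\infty$-proof of its premise to an $\infty$-proof of its conclusion. *)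

theory Defs
  imports Main "HOL-Library.Multiset" "HOL-Library.Extended_Nat"
begin

datatype 'a fm = Bot | At 'a | Imp "'a fm" "'a fm" | Box "'a fm"

type_synonym 'a sequent = "'a fm multiset \<times> 'a fm multiset"

datatype rlab = Ax | ImpL | ImpR | Refl | BoxR | Cut

text \<open>Local correctness of one rule application: premises (in order) and conclusion.
  For BoxR the premise with index 0 is the left premise, index 1 the right premise.\<close>
fun inference :: "rlab \<Rightarrow> 'a sequent list \<Rightarrow> 'a sequent \<Rightarrow> bool" where
  "inference Ax ps s \<longleftrightarrow> ps = [] \<and>
     ((\<exists>p. At p \<in># fst s \<and> At p \<in># snd s) \<or> Bot \<in># fst s)"
| "inference ImpL ps s \<longleftrightarrow> (\<exists>\<Gamma> \<Delta> A B.
     ps = [(\<Gamma> + {#B#}, \<Delta>), (\<Gamma>, {#A#} + \<Delta>)] \<and> s = (\<Gamma> + {#Imp A B#}, \<Delta>))"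
| "inference ImpR ps s \<longleftrightarrow> (\<exists>\<Gamma> \<Delta> A B.
     ps = [(\<Gamma> + {#A#}, {#B#} + \<Delta>)] \<and> s = (\<Gamma>, {#Imp A B#} + \<Delta>))"
| "inference Refl ps s \<longleftrightarrow> (\<exists>\<Gamma> \<Delta> B.
     ps = [(\<Gamma> + {#B, Box B#}, \<Delta>)] \<and> s = (\<Gamma> + {#Box B#}, \<Delta>))"
| "inference BoxR ps s \<longleftrightarrow> (\<exists>\<Gamma> \<Delta> \<Pi> A.
     ps = [(\<Gamma> + image_mset Box \<Pi>, {#A#} + \<Delta>), (image_mset Box \<Pi>, {#A#})] \<and>
     s = (\<Gamma> + image_mset Box \<Pi>, {#Box A#} + \<Delta>))"
| "inference Cut ps s \<longleftrightarrow> (\<exists>\<Gamma> \<Delta> A.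
     ps = [(\<Gamma>, {#A#} + \<Delta>), (\<Gamma> + {#A#}, \<Delta>)] \<and> s = (\<Gamma>, \<Delta>))"

codatatype 'a ptree = Node (lab: "'a sequent \<times> rlab") (subs: "'a ptree list")

definition seq :: "'a ptree \<Rightarrow> 'a sequent" where "seq t = fst (lab t)"
definition rl :: "'a ptree \<Rightarrow> rlab" where "rl t = snd (lab t)"

fun valid :: "'a ptree \<Rightarrow> nat list \<Rightarrow> bool" where
  "valid t [] = True"
| "valid t (i # is) = (i < length (subs t) \<and> valid (subs t ! i) is)"

fun sub :: "'a ptree \<Rightarrow> nat list \<Rightarrow> 'a ptree" where
  "sub t [] = t"
| "sub t (i # is) = sub (subs t ! i) is"

fun rbc :: "'a ptree \<Rightarrow> nat list \<Rightarrow> nat" where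
  "rbc t [] = 0"
| "rbc t (i # is) = (if rl t = BoxR \<and> i = 1 then 1 else 0) + rbc (subs t ! i) is"

definition step_ok :: "'a ptree \<Rightarrow> bool" where
  "step_ok t \<longleftrightarrow> inference (rl t) (map seq (subs t)) (seq t)"

text \<open>An infinite branch is an infinite sequence of child indices all of whose prefixes
  are addresses; it passes through a right premise of (Box) at step n iff the node at the
  prefix of length n is a (Box) application and b n = 1.\<close>
definition inf_branch :: "'a ptree \<Rightarrow> (nat \<Rightarrow> nat) \<Rightarrow> bool" where
  "inf_branch t b \<longleftrightarrow> (\<forall>n. valid t (map b [0..<n]))"

definition is_proof :: "'a ptree \<Rightarrow> bool" where
  "is_proof t \<longleftrightarrow> (\<forall>\<alpha>. valid t \<alpha> \<longrightarrow> step_ok (sub t \<alpha>)) \<and>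
     (\<forall>b. inf_branch t b \<longrightarrow>
        infinite {n. rl (sub t (map b [0..<n])) = BoxR \<and> b n = 1})"

definition Proofs :: "'a ptree set" where "Proofs = {t. is_proof t}"

text \<open>Nodes of the n-fragment: addresses whose proper prefixes have passed fewer than n
  right premises of (Box); the n-th right premises themselves are the cut-off leaves.\<close>
definition in_frag :: "nat \<Rightarrow> 'a ptree \<Rightarrow> nat list \<Rightarrow> bool" where
  "in_frag n t \<alpha> \<longleftrightarrow> valid t \<alpha> \<and> (\<alpha> = [] \<or> rbc t (butlast \<alpha>) < n)"

text \<open>Inner nodes of the n-fragment (whose rule application belongs to the fragment).\<close>
definition inner :: "nat \<Rightarrow> 'a ptree \<Rightarrow> nat list \<Rightarrow> bool" where
  "inner n t \<alpha> \<longleftrightarrow> valid t \<alpha> \<and> rbc t \<alpha> < n"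

definition sim :: "nat \<Rightarrow> 'a ptree \<Rightarrow> 'a ptree \<Rightarrow> bool" where
  "sim n t t' \<longleftrightarrow> n = 0 \<or>
     ((\<forall>\<alpha>. in_frag n t \<alpha> \<longleftrightarrow> in_frag n t' \<alpha>) \<and>
      (\<forall>\<alpha>. in_frag n t \<alpha> \<longrightarrow> seq (sub t \<alpha>) = seq (sub t' \<alpha>)) \<and>
      (\<forall>\<alpha>. inner n t \<alpha> \<longrightarrow> rl (sub t \<alpha>) = rl (sub t' \<alpha>)))"

definition Pn :: "nat \<Rightarrow> 'a ptree set" where
  "Pn n = {t \<in> Proofs. \<forall>\<alpha>. inner n t \<alpha> \<longrightarrow> rl (sub t \<alpha>) \<noteq> Cut}"

definition height :: "'a ptree \<Rightarrow> enat" where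
  "height t = Sup {enat (length \<alpha>) | \<alpha>. in_frag 1 t \<alpha>}"

definition strongly_admissible :: "('a sequent \<times> 'a sequent) set \<Rightarrow> bool" where
  "strongly_admissible R \<longleftrightarrow> (\<exists>u :: 'a ptree \<Rightarrow> 'a ptree.
     (\<forall>\<pi>\<in>Proofs. u \<pi> \<in> Proofs) \<and>
     (\<forall>\<pi>\<in>Proofs. \<forall>\<pi>'\<in>Proofs. \<forall>n. sim n \<pi> \<pi>' \<longrightarrow> sim n (u \<pi>) (u \<pi>')) \<and>
     (\<forall>\<pi>\<in>Proofs. \<forall>n. \<pi> \<in> Pn n \<longrightarrow> u \<pi> \<in> Pn n) \<and>
     (\<forall>\<pi>\<in>Proofs. height (u \<pi>) \<le> height \<pi>) \<and>
     (\<forall>(s, s')\<in>R. \<forall>\<pi>\<in>Proofs. seq \<pi> = s \<longrightarrow> seq (u \<pi>) = s'))"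

definition acl :: "'a \<Rightarrow> ('a sequent \<times> 'a sequent) set" where
  "acl p = {((\<Gamma> + {#At p, At p#}, \<Delta>), (\<Gamma> + {#At p#}, \<Delta>)) | \<Gamma> \<Delta>. True}"

definition acr :: "'a \<Rightarrow> ('a sequent \<times> 'a sequent) set" where
  "acr p = {((\<Gamma>, {#At p, At p#} + \<Delta>), (\<Gamma>, {#At p#} + \<Delta>)) | \<Gamma> \<Delta>. True}"

end

theory Submission
  imports Defs "HOL-Library.Product_Plus"
begin

(* Atoms are never principal outside initial sequents, so if an atomic sequent c occurs twice in
   the conclusion of a rule, it occurs twice in the context that the conclusion shares with every
   premise other than the right premise of (Box), whose context is reset to Box Pi => A.  Deleting one
   copy of c from every sequent of the main fragment, and leaving everything above right premises of
   (Box) untouched, therefore yields an infinity-proof with the same rules at the same addresses;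
   as only sequents of the main fragment change, the map is non-expansive, adequate and
   height-preserving. *)

definition atomic :: "'a fm multiset \<Rightarrow> bool" where
  "atomic M \<longleftrightarrow> set_mset M \<subseteq> range At"

definition sequent_subset :: "'a sequent \<Rightarrow> 'a sequent \<Rightarrow> bool" where
  "sequent_subset c s \<longleftrightarrow> fst c \<subseteq># fst s \<and> snd c \<subseteq># snd s"

definition map_main_premises ::
  "('a sequent \<Rightarrow> 'a sequent) \<Rightarrow> rlab \<Rightarrow> 'a sequent list \<Rightarrow> 'a sequent list" where
  "map_main_premises f r ps = map (\<lambda>i. if r = BoxR \<and> i = 1 then ps ! i else f (ps ! i)) [0..<length ps]"

lemma map_main_premises_simps [simp]:
  "map_main_premises f r [] = []"
  "map_main_premises f r [q] = [f q]"
  "map_main_premises f r [q, q'] = [f q, if r = BoxR then q' else f q']"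
  by (simp_all add: map_main_premises_def upt_rec)

lemma atomic_subset_context:
  assumes "atomic C" "set_mset N \<inter> range At = {}" "C \<subseteq># G + N"
  shows "C \<subseteq># G"
  unfolding subseteq_mset_def
proof
  fix x
  show "count C x \<le> count G x"
  proof (cases "x \<in># C")
    case True
    then have "x \<notin># N" using assms(1,2) by (auto simp: atomic_def)
    then show ?thesis using assms(3) by (metis add.right_neutral count_union mset_subset_eq_count not_in_iff)
  qed (simp add: not_in_iff)
qed

lemma subset_mset_add_mset_right: "C \<subseteq># G \<Longrightarrow> C \<subseteq># add_mset x G"
  by (metis add_mset_add_single mset_subset_eq_add_left subset_mset.order_trans)

lemma atomic_subset_add_mset_iff:
  "atomic C \<Longrightarrow> (\<And>q. x \<noteq> At q) \<Longrightarrow> C \<subseteq># add_mset x G \<longleftrightarrow> C \<subseteq># G"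
  using atomic_subset_context[of C "{#x#}" G] by (force intro: subset_mset_add_mset_right)

lemma atomic_subset_plus_boxes_iff:
  "atomic C \<Longrightarrow> C \<subseteq># G + image_mset Box \<Pi> \<longleftrightarrow> C \<subseteq># G"
  using atomic_subset_context[of C "image_mset Box \<Pi>" G] by (auto intro: subset_mset.add_increasing2)

lemma mem_diff_of_double_subset: "C + C \<subseteq># M \<Longrightarrow> x \<in># M \<Longrightarrow> x \<in># M - C"
proof -
  assume "C + C \<subseteq># M" "x \<in># M"
  then have "2 * count C x \<le> count M x" "0 < count M x"
    by (auto dest: mset_subset_eq_count[where a = x])
  then show ?thesis unfolding in_diff_count by linarith
qed

lemma inference_premise_sequent_subset:
  assumes "inference r ps s" "atomic (fst c)" "atomic (snd c)" "sequent_subset c s"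
    "i < length ps" "\<not> (r = BoxR \<and> i = 1)"
  shows "sequent_subset c (ps ! i)"
  using assms by (cases r) (auto simp: sequent_subset_def less_2_cases_iff nth_Cons'
      atomic_subset_add_mset_iff atomic_subset_plus_boxes_iff subset_mset_add_mset_right)

lemma add_mset_diff_subset: "C \<subseteq># G \<Longrightarrow> add_mset x G - C = add_mset x (G - C)"
  by (metis add_mset_add_single subset_mset.diff_add_assoc2)

lemma sequent_subset_of_double: "sequent_subset (c + c) s \<Longrightarrow> sequent_subset c s"
  unfolding sequent_subset_def by (auto intro: subset_mset.order_trans[OF mset_subset_eq_add_left])

lemma inference_contract:
  assumes "inference r ps s" "atomic (fst c)" "atomic (snd c)" "sequent_subset (c + c) s"
  shows "inference r (map_main_premises (\<lambda>q. q - c) r ps) (s - c)"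
proof (cases r)
  case Ax
  then show ?thesis using assms(1,4) by (auto simp: sequent_subset_def intro: mem_diff_of_double_subset)
next
  case ImpL
  then obtain \<Gamma> \<Delta> A B where "ps = [(\<Gamma> + {#B#}, \<Delta>), (\<Gamma>, {#A#} + \<Delta>)]" "s = (\<Gamma> + {#Imp A B#}, \<Delta>)"
    using assms(1) by auto
  moreover have "fst c \<subseteq># \<Gamma>" "snd c \<subseteq># \<Delta>"
    using sequent_subset_of_double[OF assms(4)] assms(2,3) calculation(2)
    by (auto simp: sequent_subset_def atomic_subset_add_mset_iff)
  ultimately have
    "map_main_premises (\<lambda>q. q - c) ImpL ps = [((\<Gamma> - fst c) + {#B#}, \<Delta> - snd c), (\<Gamma> - fst c, {#A#} + (\<Delta> - snd c))]"
    "s - c = ((\<Gamma> - fst c) + {#Imp A B#}, \<Delta> - snd c)"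
    by (simp_all add: minus_prod_def add_mset_diff_subset)
  then show ?thesis unfolding ImpL by (simp only: inference.simps) blast
next
  case ImpR
  then obtain \<Gamma> \<Delta> A B where "ps = [(\<Gamma> + {#A#}, {#B#} + \<Delta>)]" "s = (\<Gamma>, {#Imp A B#} + \<Delta>)"
    using assms(1) by auto
  moreover have "fst c \<subseteq># \<Gamma>" "snd c \<subseteq># \<Delta>"
    using sequent_subset_of_double[OF assms(4)] assms(2,3) calculation(2)
    by (auto simp: sequent_subset_def atomic_subset_add_mset_iff)
  ultimately have
    "map_main_premises (\<lambda>q. q - c) ImpR ps = [((\<Gamma> - fst c) + {#A#}, {#B#} + (\<Delta> - snd c))]"
    "s - c = (\<Gamma> - fst c, {#Imp A B#} + (\<Delta> - snd c))"
    by (simp_all add: minus_prod_def add_mset_diff_subset)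
  then show ?thesis unfolding ImpR by (simp only: inference.simps) blast
next
  case Refl
  then obtain \<Gamma> \<Delta> B where "ps = [(\<Gamma> + {#B, Box B#}, \<Delta>)]" "s = (\<Gamma> + {#Box B#}, \<Delta>)"
    using assms(1) by auto
  moreover have "fst c \<subseteq># \<Gamma>" "snd c \<subseteq># \<Delta>"
    using sequent_subset_of_double[OF assms(4)] assms(2,3) calculation(2)
    by (auto simp: sequent_subset_def atomic_subset_add_mset_iff)
  ultimately have
    "map_main_premises (\<lambda>q. q - c) Refl ps = [((\<Gamma> - fst c) + {#B, Box B#}, \<Delta> - snd c)]"
    "s - c = ((\<Gamma> - fst c) + {#Box B#}, \<Delta> - snd c)"
    by (simp_all add: minus_prod_def add_mset_diff_subset subset_mset_add_mset_right)
  then show ?thesis unfolding Refl by (simp only: inference.simps) blast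
next
  case BoxR
  then obtain \<Gamma> \<Delta> \<Pi> A where
    "ps = [(\<Gamma> + image_mset Box \<Pi>, {#A#} + \<Delta>), (image_mset Box \<Pi>, {#A#})]"
    "s = (\<Gamma> + image_mset Box \<Pi>, {#Box A#} + \<Delta>)"
    using assms(1) by auto
  moreover have "fst c \<subseteq># \<Gamma>" "snd c \<subseteq># \<Delta>"
    using sequent_subset_of_double[OF assms(4)] assms(2,3) calculation(2)
    by (auto simp: sequent_subset_def atomic_subset_add_mset_iff atomic_subset_plus_boxes_iff)
  moreover have "\<Gamma> + image_mset Box \<Pi> - fst c = (\<Gamma> - fst c) + image_mset Box \<Pi>"
    using calculation(3) by (rule subset_mset.diff_add_assoc2)
  ultimately have
    "map_main_premises (\<lambda>q. q - c) BoxR ps =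
       [((\<Gamma> - fst c) + image_mset Box \<Pi>, {#A#} + (\<Delta> - snd c)), (image_mset Box \<Pi>, {#A#})]"
    "s - c = ((\<Gamma> - fst c) + image_mset Box \<Pi>, {#Box A#} + (\<Delta> - snd c))"
    by (simp_all add: minus_prod_def add_mset_diff_subset)
  then show ?thesis unfolding BoxR by (simp only: inference.simps) blast
next
  case Cut
  then obtain \<Gamma> \<Delta> A where "ps = [(\<Gamma>, {#A#} + \<Delta>), (\<Gamma> + {#A#}, \<Delta>)]" "s = (\<Gamma>, \<Delta>)"
    using assms(1) by auto
  moreover have "fst c \<subseteq># \<Gamma>" "snd c \<subseteq># \<Delta>"
    using sequent_subset_of_double[OF assms(4)] calculation(2) by (auto simp: sequent_subset_def)
  ultimately have
    "map_main_premises (\<lambda>q. q - c) Cut ps = [(\<Gamma> - fst c, {#A#} + (\<Delta> - snd c)), ((\<Gamma> - fst c) + {#A#}, \<Delta> - snd c)]"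
    "s - c = (\<Gamma> - fst c, \<Delta> - snd c)"
    by (simp_all add: minus_prod_def add_mset_diff_subset)
  then show ?thesis unfolding Cut by (simp only: inference.simps) blast
qed

primcorec map_main_fragment :: "('a sequent \<Rightarrow> 'a sequent) \<Rightarrow> 'a ptree \<Rightarrow> 'a ptree" where
  "map_main_fragment f t = Node (f (seq t), rl t)
     (map (\<lambda>i. if rl t = BoxR \<and> i = 1 then subs t ! i else map_main_fragment f (subs t ! i))
       [0..<length (subs t)])"

lemma seq_map_main_fragment [simp]: "seq (map_main_fragment f t) = f (seq t)"
  by (simp add: seq_def)

lemma rl_map_main_fragment [simp]: "rl (map_main_fragment f t) = rl t"
  by (simp add: rl_def)

lemma length_subs_map_main_fragment [simp]: "length (subs (map_main_fragment f t)) = length (subs t)"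
  by simp

lemma nth_subs_map_main_fragment [simp]:
  "i < length (subs t) \<Longrightarrow> subs (map_main_fragment f t) ! i =
     (if rl t = BoxR \<and> i = 1 then subs t ! i else map_main_fragment f (subs t ! i))"
  by simp

declare map_main_fragment.sel(2) [simp del]

lemma map_seq_subs_map_main_fragment:
  "map seq (subs (map_main_fragment f t)) = map_main_premises f (rl t) (map seq (subs t))"
  by (rule nth_equalityI) (auto simp: map_main_premises_def)

lemma valid_map_main_fragment [simp]: "valid (map_main_fragment f t) \<alpha> = valid t \<alpha>"
proof (induction \<alpha> arbitrary: t)
  case (Cons i \<alpha>)
  show ?case
    by (cases "i < length (subs t)") (simp_all add: Cons.IH)
qed simp

lemma sub_map_main_fragment:
  "valid t \<alpha> \<Longrightarrow>
   sub (map_main_fragment f t) \<alpha> = (if rbc t \<alpha> = 0 then map_main_fragment f (sub t \<alpha>) else sub t \<alpha>)"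
proof (induction \<alpha> arbitrary: t)
  case (Cons i \<alpha>)
  then show ?case
    by (cases "rl t = BoxR \<and> i = 1") (auto simp: Cons.IH)
qed simp

lemma rl_sub_map_main_fragment [simp]: "valid t \<alpha> \<Longrightarrow> rl (sub (map_main_fragment f t) \<alpha>) = rl (sub t \<alpha>)"
  by (simp add: sub_map_main_fragment)

lemma rbc_map_main_fragment [simp]: "valid t \<alpha> \<Longrightarrow> rbc (map_main_fragment f t) \<alpha> = rbc t \<alpha>"
proof (induction \<alpha> arbitrary: t)
  case (Cons i \<alpha>)
  then show ?case
    by (cases "rl t = BoxR \<and> i = 1") (simp_all add: Cons.IH)
qed simp

lemma valid_append: "valid t (\<alpha> @ \<beta>) \<longleftrightarrow> valid t \<alpha> \<and> valid (sub t \<alpha>) \<beta>"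
  by (induction \<alpha> arbitrary: t) auto

lemma rbc_append: "rbc t (\<alpha> @ \<beta>) = rbc t \<alpha> + rbc (sub t \<alpha>) \<beta>"
  by (induction \<alpha> arbitrary: t) auto

lemma valid_butlast: "valid t \<alpha> \<Longrightarrow> valid t (butlast \<alpha>)"
  by (cases \<alpha> rule: rev_cases) (simp_all add: valid_append)

lemma rbc_butlast_le: "rbc t (butlast \<alpha>) \<le> rbc t \<alpha>"
  by (cases \<alpha> rule: rev_cases) (simp_all add: rbc_append)

lemma in_frag_map_main_fragment [simp]: "in_frag n (map_main_fragment f t) \<alpha> = in_frag n t \<alpha>"
  unfolding in_frag_def using valid_butlast by fastforce

lemma inner_map_main_fragment [simp]: "inner n (map_main_fragment f t) \<alpha> = inner n t \<alpha>"
  unfolding inner_def by auto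

lemma inf_branch_map_main_fragment [simp]: "inf_branch (map_main_fragment f t) b = inf_branch t b"
  by (simp add: inf_branch_def)

lemma height_map_main_fragment [simp]: "height (map_main_fragment f t) = height t"
  by (simp add: height_def)

lemma inner_imp_in_frag: "inner n t \<alpha> \<Longrightarrow> in_frag n t \<alpha>"
  using rbc_butlast_le[of t \<alpha>] by (auto simp: inner_def in_frag_def valid_butlast)

lemma rbc_eq_if_sim:
  assumes "sim n t t'" "n > 0" "in_frag n t \<alpha>"
  shows "rbc t \<alpha> = rbc t' \<alpha>"
  using assms(3)
proof (induction \<alpha> rule: rev_induct)
  case (snoc i \<alpha>)
  then have inner: "inner n t \<alpha>"
    by (simp add: in_frag_def inner_def valid_append)
  then have "rl (sub t \<alpha>) = rl (sub t' \<alpha>)"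
    using assms(1,2) by (simp add: sim_def)
  moreover have "rbc t \<alpha> = rbc t' \<alpha>"
    using snoc.IH inner_imp_in_frag[OF inner] .
  ultimately show ?case by (simp add: rbc_append)
qed simp

lemma invariant_on_main_fragment:
  assumes inv: "\<And>r ps s i. inference r ps s \<Longrightarrow> P s \<Longrightarrow> i < length ps \<Longrightarrow> \<not> (r = BoxR \<and> i = 1) \<Longrightarrow> P (ps ! i)"
    and "\<forall>\<beta>. valid t \<beta> \<longrightarrow> step_ok (sub t \<beta>)" "P (seq t)" "valid t \<alpha>" "rbc t \<alpha> = 0"
  shows "P (seq (sub t \<alpha>))"
  using assms(2-)
proof (induction \<alpha> arbitrary: t)
  case (Cons i \<alpha>)
  from Cons.prems(3,4) have i: "i < length (subs t)" "\<not> (rl t = BoxR \<and> i = 1)"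
    and rest: "valid (subs t ! i) \<alpha>" "rbc (subs t ! i) \<alpha> = 0"
    by (auto split: if_splits)
  have "step_ok t"
    using Cons.prems(1) by (metis sub.simps(1) valid.simps(1))
  then have "P (map seq (subs t) ! i)"
    using inv[of "rl t" "map seq (subs t)" "seq t" i] Cons.prems(2) i unfolding step_ok_def by simp
  moreover have "\<forall>\<beta>. valid (subs t ! i) \<beta> \<longrightarrow> step_ok (sub (subs t ! i) \<beta>)"
    using Cons.prems(1) i(1) by (metis sub.simps(2) valid.simps(2))
  ultimately have "P (seq (sub (subs t ! i) \<alpha>))"
    using Cons.IH rest i(1) by simp
  then show ?case by simp
qed simp

lemma is_proof_map_main_fragment:
  assumes inv: "\<And>r ps s i. inference r ps s \<Longrightarrow> P s \<Longrightarrow> i < length ps \<Longrightarrow> \<not> (r = BoxR \<and> i = 1) \<Longrightarrow> P (ps ! i)"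
    and step: "\<And>r ps s. inference r ps s \<Longrightarrow> P s \<Longrightarrow> inference r (map_main_premises f r ps) (f s)"
    and is_proof: "is_proof t" and root: "P (seq t)"
  shows "is_proof (map_main_fragment f t)"
  unfolding is_proof_def
proof (intro conjI allI impI)
  have steps: "\<forall>\<alpha>. valid t \<alpha> \<longrightarrow> step_ok (sub t \<alpha>)"
    using is_proof by (simp add: is_proof_def)
  fix \<alpha>
  assume "valid (map_main_fragment f t) \<alpha>"
  then have valid: "valid t \<alpha>" by simp
  show "step_ok (sub (map_main_fragment f t) \<alpha>)"
  proof (cases "rbc t \<alpha> = 0")
    case True
    then have "P (seq (sub t \<alpha>))"
      using invariant_on_main_fragment[OF inv steps root valid] by simp
    then have "inference (rl (sub t \<alpha>)) (map_main_premises f (rl (sub t \<alpha>)) (map seq (subs (sub t \<alpha>))))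
        (f (seq (sub t \<alpha>)))"
      using step steps valid unfolding step_ok_def by blast
    then show ?thesis
      using valid True by (simp add: step_ok_def sub_map_main_fragment map_seq_subs_map_main_fragment)
  next
    case False
    then show ?thesis
      using steps valid by (simp add: sub_map_main_fragment)
  qed
next
  fix b
  assume "inf_branch (map_main_fragment f t) b"
  then have branch: "inf_branch t b" by simp
  then have "{n. rl (sub (map_main_fragment f t) (map b [0..<n])) = BoxR \<and> b n = 1}
      = {n. rl (sub t (map b [0..<n])) = BoxR \<and> b n = 1}"
    unfolding inf_branch_def by (intro Collect_cong) simp
  moreover have "infinite {n. rl (sub t (map b [0..<n])) = BoxR \<and> b n = 1}"
    using is_proof branch unfolding is_proof_def by blast
  ultimately show "infinite {n. rl (sub (map_main_fragment f t) (map b [0..<n])) = BoxR \<and> b n = 1}"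
    by (simp only: not_False_eq_True)
qed

lemma sim_map_main_fragment:
  assumes "sim n t t'"
  shows "sim n (map_main_fragment f t) (map_main_fragment f t')"
proof (cases "n = 0")
  case False
  have frag: "in_frag n t \<alpha> \<longleftrightarrow> in_frag n t' \<alpha>" for \<alpha>
    using assms False by (simp add: sim_def)
  have "seq (sub (map_main_fragment f t) \<alpha>) = seq (sub (map_main_fragment f t') \<alpha>)"
    if "in_frag n t \<alpha>" for \<alpha>
  proof -
    have "valid t \<alpha>" "valid t' \<alpha>" "seq (sub t \<alpha>) = seq (sub t' \<alpha>)"
      using that frag[of \<alpha>] assms False by (auto simp: sim_def in_frag_def)
    moreover have "rbc t \<alpha> = rbc t' \<alpha>"
      using rbc_eq_if_sim[OF assms] False that by simp
    ultimately show ?thesis by (simp add: sub_map_main_fragment)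
  qed
  moreover have "rl (sub (map_main_fragment f t) \<alpha>) = rl (sub (map_main_fragment f t') \<alpha>)"
    if "inner n t \<alpha>" for \<alpha>
  proof -
    have "valid t \<alpha>" "valid t' \<alpha>"
      using inner_imp_in_frag[OF that] frag[of \<alpha>] by (auto simp: in_frag_def)
    then show ?thesis
      using that assms False by (simp add: sim_def)
  qed
  ultimately show ?thesis
    using frag unfolding sim_def in_frag_map_main_fragment inner_map_main_fragment by blast
qed (simp add: sim_def)

lemma Pn_map_main_fragment:
  assumes "t \<in> Pn n" "is_proof (map_main_fragment f t)"
  shows "map_main_fragment f t \<in> Pn n"
  using assms by (auto simp: Pn_def Proofs_def inner_def)

theorem strongly_admissible_by_map_main_fragment:
  assumes inv: "\<And>r ps s i. inference r ps s \<Longrightarrow> P s \<Longrightarrow> i < length ps \<Longrightarrow> \<not> (r = BoxR \<and> i = 1) \<Longrightarrow> P (ps ! i)"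
    and step: "\<And>r ps s. inference r ps s \<Longrightarrow> P s \<Longrightarrow> inference r (map_main_premises f r ps) (f s)"
    and instances: "\<And>s s'. (s, s') \<in> R \<Longrightarrow> P s \<and> s' = f s"
  shows "strongly_admissible R"
proof -
  define u where "u \<pi> = (if P (seq \<pi>) then map_main_fragment f \<pi> else \<pi>)" for \<pi> :: "'a ptree"
  have u_proof: "u \<pi> \<in> Proofs" if "\<pi> \<in> Proofs" for \<pi>
    using that is_proof_map_main_fragment[where P = P and f = f, OF inv step] by (simp add: u_def Proofs_def)
  have "sim n (u \<pi>) (u \<pi>')" if "sim n \<pi> \<pi>'" for \<pi> \<pi>' n
  proof (cases "n = 0")
    case False
    then have "seq \<pi> = seq \<pi>'"
      using that unfolding sim_def in_frag_def by (metis valid.simps(1) sub.simps(1))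
    then show ?thesis
      using sim_map_main_fragment[OF that] by (simp add: u_def that)
  qed (simp add: sim_def)
  moreover have "u \<pi> \<in> Pn n" if "\<pi> \<in> Pn n" for \<pi> n
    using that u_proof[of \<pi>] Pn_map_main_fragment
    by (auto simp: u_def Pn_def Proofs_def split: if_splits)
  moreover have "height (u \<pi>) \<le> height \<pi>" for \<pi>
    by (simp add: u_def)
  moreover have "seq (u \<pi>) = s'" if "(s, s') \<in> R" "seq \<pi> = s" for s s' \<pi>
    using instances[OF that(1)] that(2) by (simp add: u_def)
  ultimately show ?thesis
    unfolding strongly_admissible_def using u_proof by blast
qed

corollary strongly_admissible_atomic_contraction:
  assumes "atomic (fst c)" "atomic (snd c)"
    and "\<And>s s'. (s, s') \<in> R \<Longrightarrow> sequent_subset (c + c) s \<and> s' = s - c"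
  shows "strongly_admissible R"
proof (rule strongly_admissible_by_map_main_fragment)
  have "atomic (fst (c + c))" "atomic (snd (c + c))"
    using assms(1,2) by (auto simp: atomic_def)
  then show "sequent_subset (c + c) (ps ! i)"
    if "inference r ps s" "sequent_subset (c + c) s" "i < length ps" "\<not> (r = BoxR \<and> i = 1)" for r ps s i
    using that inference_premise_sequent_subset by blast
  show "inference r (map_main_premises (\<lambda>s. s - c) r ps) (s - c)"
    if "inference r ps s" "sequent_subset (c + c) s" for r ps s
    using that(1) assms(1,2) that(2) by (rule inference_contract)
qed (rule assms(3))

theorem lemma5p3:
  fixes p :: 'a
  shows "strongly_admissible (acl p) \<and> strongly_admissible (acr p)"
proof
  show "strongly_admissible (acl p)"
    by (rule strongly_admissible_atomic_contraction[where c = "({#At p#}, {#})"])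
      (auto simp: atomic_def acl_def sequent_subset_def)
  show "strongly_admissible (acr p)"
    by (rule strongly_admissible_atomic_contraction[where c = "({#}, {#At p#})"])
      (auto simp: atomic_def acr_def sequent_subset_def)
qed

end
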